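(* Consider the GBDF5 coefficients $a_0=\tfrac{5\beta^4+40\beta^3+105\beta^2+100\beta+24}{120}$, $a_1=\tfrac{-10\beta^4-70\beta^3-135\beta^2-25\beta+77}{60}$, $a_2=\tfrac{15\beta^4+90\beta^3+120\beta^2-45\beta-43}{60}$, $a_3=\tfrac{-10\beta^4-50\beta^3-45\beta^2+25\beta+17}{60}$, $a_4=\tfrac{5\beta^4+20\beta^3+15\beta^2-10\beta-6}{120}$; $b_0=\tfrac{\beta(\beta^3+6\beta^2+11\beta+6)}{24}$, $b_1=\tfrac{-\beta^4-5\beta^3-5\beta^2+5\beta+6}{6}$, $b_2=\tfrac{\beta(\beta^3+4\beta^2+\beta-6)}{4}$, $b_3=\tfrac{\beta(-\beta^3-3\beta^2+\beta+3)}{6}$, $b_4=\tfrac{\beta(\beta^3+2\beta^2-\beta-2)}{24}$, $b_5=0$; $c_0=\tfrac{\beta^4+10\beta^3+35\beta^2+50\beta+24}{24}$, $c_1=-\tfrac{\beta(\beta^3+9\beta^2+26\beta+24)}{6}$, $c_2=\tfrac{\beta(\beta^3+8\beta^2+19\beta+12)}{4}$, $c_3=-\tfrac{\beta(\beta^3+7\beta^2+14\beta+8)}{6}$, $c_4=\tfrac{\beta(\beta^3+6\beta^2+11\beta+6)}{24}$. For $\beta\ge1$, $$\sigma_{\mathrm{F}}\ge1,\quad\sigma_{\mathrm{E}}\ge\frac{5(2\beta^4+16\beta^3+40\beta^2+32\beta+3)}{10\beta^4+60\beta^3+90\beta^2-32},\quad\lambda_{\mathrm{I}}\le\frac{5(2\beta^4+8\beta^3+4\beta^2-8\beta-3)}{10\beta^4+60\beta^3+90\beta^2-32},$$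 so that $\mathfrak{I}_{\mathrm{IE}}\le\dfrac{2\beta^4+8\beta^3+4\beta^2-8\beta-3}{2\beta^4+16\beta^3+40\beta^2+32\beta+3}$. If $\beta=20$, then $\sigma_{\mathrm{F}}\le\frac{399}{200}$, $\sigma_{\mathrm{E}}\le\frac{2501825}{2115968}$, $\lambda_{\mathrm{I}}\ge\frac{1769085}{2115968}$, so that $\mathfrak{I}_{\mathrm{IE}}\ge\frac{353817}{500365}$.
   Context: For coefficient vectors $(a_j)_{j=0}^{\mathrm{k}-1}$, $(b_j)_{j=0}^{\mathrm{k}}$, $(c_j)_{j=0}^{\mathrm{k}-1}$ define $a(\theta)=\sum_j a_je^{\imath j\theta}$, $b(\theta)=\sum_j b_je^{\imath j\theta}$, $c(\theta)=\sum_jc_je^{\imath j\theta}$ and $\sigma_{\mathrm{F}}=\max_{\theta\in[0,2\pi)}|1/a(\theta)|$, $\sigma_{\mathrm{E}}=\max_{\theta\in[0,2\pi)}|c(\theta)/a(\theta)|$, $\lambda_{\mathrm{I}}=\min_{\theta\in[0,2\pi)}\Re[b(\theta)/a(\theta)]$, $\mathfrak{I}_{\mathrm{IE}}=\lambda_{\mathrm{I}}/\sigma_{\mathrm{E}}$. Here $\mathrm{k}=5$. *)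

theory Defs
  imports "HOL-Analysis.Analysis"
begin

definition gbdf5_a :: "real \<Rightarrow> nat \<Rightarrow> real" where
  "gbdf5_a \<beta> j =
    (if j = 0 then (5*\<beta>^4 + 40*\<beta>^3 + 105*\<beta>^2 + 100*\<beta> + 24) / 120
     else if j = 1 then (-10*\<beta>^4 - 70*\<beta>^3 - 135*\<beta>^2 - 25*\<beta> + 77) / 60
     else if j = 2 then (15*\<beta>^4 + 90*\<beta>^3 + 120*\<beta>^2 - 45*\<beta> - 43) / 60
     else if j = 3 then (-10*\<beta>^4 - 50*\<beta>^3 - 45*\<beta>^2 + 25*\<beta> + 17) / 60
     else if j = 4 then (5*\<beta>^4 + 20*\<beta>^3 + 15*\<beta>^2 - 10*\<beta> - 6) / 120
     else 0)"

definition gbdf5_b :: "real \<Rightarrow> nat \<Rightarrow> real" where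
  "gbdf5_b \<beta> j =
    (if j = 0 then \<beta> * (\<beta>^3 + 6*\<beta>^2 + 11*\<beta> + 6) / 24
     else if j = 1 then (- (\<beta>^4) - 5*\<beta>^3 - 5*\<beta>^2 + 5*\<beta> + 6) / 6
     else if j = 2 then \<beta> * (\<beta>^3 + 4*\<beta>^2 + \<beta> - 6) / 4
     else if j = 3 then \<beta> * (- (\<beta>^3) - 3*\<beta>^2 + \<beta> + 3) / 6
     else if j = 4 then \<beta> * (\<beta>^3 + 2*\<beta>^2 - \<beta> - 2) / 24
     else 0)"

definition gbdf5_c :: "real \<Rightarrow> nat \<Rightarrow> real" where
  "gbdf5_c \<beta> j =
    (if j = 0 then (\<beta>^4 + 10*\<beta>^3 + 35*\<beta>^2 + 50*\<beta> + 24) / 24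
     else if j = 1 then - (\<beta> * (\<beta>^3 + 9*\<beta>^2 + 26*\<beta> + 24) / 6)
     else if j = 2 then \<beta> * (\<beta>^3 + 8*\<beta>^2 + 19*\<beta> + 12) / 4
     else if j = 3 then - (\<beta> * (\<beta>^3 + 7*\<beta>^2 + 14*\<beta> + 8) / 6)
     else if j = 4 then \<beta> * (\<beta>^3 + 6*\<beta>^2 + 11*\<beta> + 6) / 24
     else 0)"

definition trig_poly :: "(nat \<Rightarrow> real) \<Rightarrow> nat \<Rightarrow> real \<Rightarrow> complex" where
  "trig_poly coef n \<theta> = (\<Sum>j\<le>n. complex_of_real (coef j) * exp (\<i> * complex_of_real (real j * \<theta>)))"

definition kk :: nat where "kk = 5"

definition a_fun :: "real \<Rightarrow> real \<Rightarrow> complex" where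
  "a_fun \<beta> \<theta> = trig_poly (gbdf5_a \<beta>) (kk - 1) \<theta>"
definition b_fun :: "real \<Rightarrow> real \<Rightarrow> complex" where
  "b_fun \<beta> \<theta> = trig_poly (gbdf5_b \<beta>) kk \<theta>"
definition c_fun :: "real \<Rightarrow> real \<Rightarrow> complex" where
  "c_fun \<beta> \<theta> = trig_poly (gbdf5_c \<beta>) (kk - 1) \<theta>"

definition sigma_F :: "real \<Rightarrow> real" where
  "sigma_F \<beta> = (SUP \<theta>\<in>{0..<2*pi}. cmod (1 / a_fun \<beta> \<theta>))"
definition sigma_E :: "real \<Rightarrow> real" where
  "sigma_E \<beta> = (SUP \<theta>\<in>{0..<2*pi}. cmod (c_fun \<beta> \<theta> / a_fun \<beta> \<theta>))"
definition lambda_I :: "real \<Rightarrow> real" where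
  "lambda_I \<beta> = (INF \<theta>\<in>{0..<2*pi}. Re (b_fun \<beta> \<theta> / a_fun \<beta> \<theta>))"
definition I_IE :: "real \<Rightarrow> real" where
  "I_IE \<beta> = lambda_I \<beta> / sigma_E \<beta>"

end

theory Submission
  imports Defs
begin

(* Put x = cos theta.  Since cos (j theta) = T_j(x) and sin (j theta) = sin theta U_(j-1)(x),
   the quantities |a|^2, |c|^2 and Re (b conj a) are polynomials in x.
   The bounds for beta >= 1 are the values at theta = 0 and theta = pi; they bound the supremum
   and infimum because |a| >= 2/5 uniformly.  That lower bound comes from writing |a|^2 in
   u = (1 - x)/2 as 1 + u/3 + 8u^2/45 - N u^3 + P u^4 and absorbing N u^3 <= 4/5 + P u^4 by the
   weighted AM-GM inequality 256 k y^3 <= 27 (k + y)^4.  For beta = 20 the three estimates are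
   positivity statements for quartics in x, certified by explicit sums of squares. *)

fun cheb_T :: "nat \<Rightarrow> real \<Rightarrow> real" where
  "cheb_T 0 x = 1"
| "cheb_T (Suc 0) x = x"
| "cheb_T (Suc (Suc n)) x = 2 * x * cheb_T (Suc n) x - cheb_T n x"

fun cheb_U :: "nat \<Rightarrow> real \<Rightarrow> real" where
  "cheb_U 0 x = 1"
| "cheb_U (Suc 0) x = 2 * x"
| "cheb_U (Suc (Suc n)) x = 2 * x * cheb_U (Suc n) x - cheb_U n x"

lemma cos_of_nat_mult_eq_cheb_T: "cos (real n * \<theta>) = cheb_T n (cos \<theta>)"
proof (induction n "cos \<theta>" rule: cheb_T.induct)
  case (3 n)
  let ?x = "real (Suc n) * \<theta>"
  have "cos (?x + \<theta>) = 2 * cos \<theta> * cos ?x - cos (?x - \<theta>)"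
    by (simp add: cos_add cos_diff)
  moreover have "?x + \<theta> = real (Suc (Suc n)) * \<theta>" "?x - \<theta> = real n * \<theta>"
    by (simp_all add: algebra_simps)
  ultimately show ?case using 3 by simp
qed simp_all

lemma sin_Suc_mult_eq_cheb_U: "sin (real (Suc n) * \<theta>) = sin \<theta> * cheb_U n (cos \<theta>)"
proof (induction n "cos \<theta>" rule: cheb_U.induct)
  case 2
  then show ?case by (simp add: sin_double)
next
  case (3 n)
  let ?x = "real (Suc (Suc n)) * \<theta>"
  have "sin (?x + \<theta>) = 2 * cos \<theta> * sin ?x - sin (?x - \<theta>)"
    by (simp add: sin_add sin_diff)
  moreover have "?x + \<theta> = real (Suc (Suc (Suc n))) * \<theta>" "?x - \<theta> = real (Suc n) * \<theta>"
    by (simp_all add: algebra_simps)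
  ultimately show ?case using 3 by (simp add: algebra_simps)
qed simp

definition cos_poly :: "(nat \<Rightarrow> real) \<Rightarrow> nat \<Rightarrow> real \<Rightarrow> real" where
  "cos_poly f n x = (\<Sum>j\<le>n. f j * cheb_T j x)"

definition sin_poly :: "(nat \<Rightarrow> real) \<Rightarrow> nat \<Rightarrow> real \<Rightarrow> real" where
  "sin_poly f n x = (\<Sum>j<n. f (Suc j) * cheb_U j x)"

lemma Re_trig_poly: "Re (trig_poly f n \<theta>) = cos_poly f n (cos \<theta>)"
  by (simp add: trig_poly_def cos_poly_def Re_exp cos_of_nat_mult_eq_cheb_T)

lemma Im_trig_poly: "Im (trig_poly f n \<theta>) = sin \<theta> * sin_poly f n (cos \<theta>)"
proof -
  have "Im (trig_poly f n \<theta>) = (\<Sum>j<Suc n. f j * sin (real j * \<theta>))"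
    by (simp add: trig_poly_def Im_exp lessThan_Suc_atMost)
  also have "\<dots> = (\<Sum>j<n. f (Suc j) * sin (real (Suc j) * \<theta>))"
    by (subst sum.lessThan_Suc_shift) simp
  also have "\<dots> = sin \<theta> * sin_poly f n (cos \<theta>)"
    unfolding sin_poly_def sum_distrib_left sin_Suc_mult_eq_cheb_U by (simp add: mult_ac)
  finally show ?thesis .
qed

lemma trig_poly_Suc_eq: "f (Suc n) = 0 \<Longrightarrow> trig_poly f (Suc n) \<theta> = trig_poly f n \<theta>"
  by (simp add: trig_poly_def)

lemma trig_poly_sin_eq_0: "sin \<theta> = 0 \<Longrightarrow> trig_poly f n \<theta> = of_real (cos_poly f n (cos \<theta>))"
  by (rule complex_eqI) (simp_all add: Re_trig_poly Im_trig_poly)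

definition sq_norm_poly :: "(nat \<Rightarrow> real) \<Rightarrow> nat \<Rightarrow> real \<Rightarrow> real" where
  "sq_norm_poly f n x = cos_poly f n x ^ 2 + (1 - x\<^sup>2) * sin_poly f n x ^ 2"

definition re_conj_poly :: "(nat \<Rightarrow> real) \<Rightarrow> nat \<Rightarrow> (nat \<Rightarrow> real) \<Rightarrow> nat \<Rightarrow> real \<Rightarrow> real" where
  "re_conj_poly g m f n x =
     cos_poly g m x * cos_poly f n x + (1 - x\<^sup>2) * (sin_poly g m x * sin_poly f n x)"

lemma norm_trig_poly_power2: "(cmod (trig_poly f n \<theta>))\<^sup>2 = sq_norm_poly f n (cos \<theta>)"
  by (simp add: cmod_power2 Re_trig_poly Im_trig_poly sq_norm_poly_def power_mult_distrib
      sin_squared_eq)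

lemma Re_trig_poly_divide:
  "Re (trig_poly g m \<theta> / trig_poly f n \<theta>) = re_conj_poly g m f n (cos \<theta>) / sq_norm_poly f n (cos \<theta>)"
proof -
  have "sin \<theta> * x * (sin \<theta> * y) = (sin \<theta>)\<^sup>2 * (x * y)" for x y
    by (simp add: power2_eq_square mult_ac)
  then show ?thesis
    by (simp add: Re_divide Re_trig_poly Im_trig_poly re_conj_poly_def sq_norm_poly_def
        power_mult_distrib sin_squared_eq)
qed

lemma norm_trig_poly_le: "cmod (trig_poly f n \<theta>) \<le> (\<Sum>j\<le>n. \<bar>f j\<bar>)"
  unfolding trig_poly_def by (rule order.trans [OF norm_sum]) (simp add: norm_mult)

lemma cos_poly_four:
  "cos_poly f 4 x = f 0 + f 1 * x + f 2 * (2*x^2 - 1) + f 3 * (4*x^3 - 3*x) + f 4 * (8*x^4 - 8*x^2 + 1)"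
  by (simp add: cos_poly_def eval_nat_numeral atMost_Suc algebra_simps)

lemma sin_poly_four: "sin_poly f 4 x = f 1 + f 2 * (2*x) + f 3 * (4*x^2 - 1) + f 4 * (8*x^3 - 4*x)"
  by (simp add: sin_poly_def eval_nat_numeral lessThan_Suc algebra_simps)

lemma norm_trig_poly_divide_le:
  assumes "0 < \<delta>" and "\<delta> \<le> cmod (trig_poly f n \<theta>)"
  shows "cmod (trig_poly g m \<theta> / trig_poly f n \<theta>) \<le> (\<Sum>j\<le>m. \<bar>g j\<bar>) / \<delta>"
  unfolding norm_divide using assms norm_trig_poly_le [of g m \<theta>]
  by (intro frac_le) (auto intro: sum_nonneg)

lemma weighted_amgm_power4:
  fixes k y :: real
  assumes "0 \<le> k" and "0 \<le> y"
  shows "256 * k * y ^ 3 \<le> 27 * (k + y) ^ 4"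
proof -
  have "27 * (k + y) ^ 4 - 256 * k * y ^ 3 = (y - 3 * k)\<^sup>2 * (27 * y\<^sup>2 + 14 * k * y + 3 * k\<^sup>2)"
    by algebra
  moreover have "0 \<le> (y - 3 * k)\<^sup>2 * (27 * y\<^sup>2 + 14 * k * y + 3 * k\<^sup>2)"
    using assms by simp
  ultimately show ?thesis by linarith
qed

lemma le_add_of_power4_le:
  fixes k y r :: real
  assumes "0 \<le> k" and "0 \<le> y" and "27 * r ^ 4 \<le> 256 * k * y ^ 3"
  shows "r \<le> k + y"
proof (rule ccontr)
  assume "\<not> r \<le> k + y"
  then have "(k + y) ^ 4 < r ^ 4"
    using assms(1,2) by (intro power_strict_mono) auto
  then show False using weighted_amgm_power4 [OF assms(1,2)] assms(3) by linarith
qed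

lemma a_fun_eq: "a_fun \<beta> \<theta> = trig_poly (gbdf5_a \<beta>) 4 \<theta>"
  by (simp add: a_fun_def kk_def)

lemma b_fun_eq: "b_fun \<beta> \<theta> = trig_poly (gbdf5_b \<beta>) 4 \<theta>"
  using trig_poly_Suc_eq [of "gbdf5_b \<beta>" 4] by (simp add: b_fun_def kk_def gbdf5_b_def)

lemma c_fun_eq: "c_fun \<beta> \<theta> = trig_poly (gbdf5_c \<beta>) 4 \<theta>"
  by (simp add: c_fun_def kk_def)

definition gbdf5_N :: "real \<Rightarrow> real" where
  "gbdf5_N t = 228/5 + t*(224 + t*(15016/45 + t*(680/3 + t*(704/9 + t*(40/3 + t*(8/9))))))"

definition gbdf5_P :: "real \<Rightarrow> real" where
  "gbdf5_P t = 8768/75 + t*(6112/9 + t*(21304/15 + t*(13624/9 + t*(41812/45 + t*(3080/9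
     + t*(224/3 + t*(80/9 + t*(4/9))))))))"

lemma sq_norm_gbdf5_a_shifted:
  "sq_norm_poly (gbdf5_a (1 + t)) 4 (1 - 2*u) =
     1 + u/3 + 8/45*u\<^sup>2 - gbdf5_N t * u ^ 3 + gbdf5_P t * u ^ 4"
  unfolding sq_norm_poly_def cos_poly_four sin_poly_four gbdf5_a_def gbdf5_N_def gbdf5_P_def
  by (simp add: field_simps) algebra

lemma gbdf5_N_power4_le:
  assumes "0 \<le> t"
  shows "27 * gbdf5_N t ^ 4 \<le> 256 * (4/5) * gbdf5_P t ^ 3"
proof -
  have "256 * (4/5) * gbdf5_P t ^ 3 - 27 * gbdf5_N t ^ 4 =
    443991923763968/2109375 + t*(287610147315712/84375 + t*(31302896891201536/1265625
    + t*(244629817279879168/2278125 + t*(132869193177147392/421875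
    + t*(101525020286179328/151875 + t*(815244846385995776/759375 + t*(1513766356529152/1125
    + t*(204393481643339776/151875 + t*(19898209488293888/18225 + t*(36811383064082432/50625
    + t*(2436187887751168/6075 + t*(16789214863222784/91125 + t*(429981091274752/6075
    + t*(691653009473536/30375 + t*(22348570345472/3645 + t*(8370072444928/6075
    + t*(3853656064/15 + t*(239223832576/6075 + t*(1188069376/243 + t*(2920050688/6075
    + t*(26312704/729 + t*(2367488/1215 + t*(16384/243 + t*(4096/3645))))))))))))))))))))))))"
    (is "_ = ?R")
    unfolding gbdf5_N_def gbdf5_P_def by algebra
  moreover have "0 \<le> ?R"
    using assms by (intro add_nonneg_nonneg mult_nonneg_nonneg) simp_all
  ultimately show ?thesis by linarith
qed

lemma sq_norm_gbdf5_a_ge: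
  assumes "1 \<le> \<beta>" and "\<bar>x\<bar> \<le> 1"
  shows "1/5 \<le> sq_norm_poly (gbdf5_a \<beta>) 4 x"
proof -
  define t where "t = \<beta> - 1"
  define u where "u = (1 - x) / 2"
  have t: "0 \<le> t" and u: "0 \<le> u" "u \<le> 1"
    using assms by (auto simp: t_def u_def)
  have P: "0 \<le> gbdf5_P t * u ^ 4"
    using t u by (simp add: gbdf5_P_def)
  have "27 * (gbdf5_N t * u ^ 3) ^ 4 = 27 * gbdf5_N t ^ 4 * u ^ 12"
    by (simp add: power_mult_distrib flip: power_mult)
  also have "\<dots> \<le> 256 * (4/5) * gbdf5_P t ^ 3 * u ^ 12"
    using gbdf5_N_power4_le [OF t] by (intro mult_right_mono) simp_all
  also have "\<dots> = 256 * (4/5) * (gbdf5_P t * u ^ 4) ^ 3"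
    by (simp add: power_mult_distrib flip: power_mult)
  finally have absorb: "gbdf5_N t * u ^ 3 \<le> 4/5 + gbdf5_P t * u ^ 4"
    using P by (intro le_add_of_power4_le) simp_all
  have "\<beta> = 1 + t" "x = 1 - 2*u"
    by (simp_all add: t_def u_def field_simps)
  then have "sq_norm_poly (gbdf5_a \<beta>) 4 x =
      1 + u/3 + 8/45*u\<^sup>2 - gbdf5_N t * u ^ 3 + gbdf5_P t * u ^ 4"
    using sq_norm_gbdf5_a_shifted by simp
  then show ?thesis
    using absorb u zero_le_power2 [of u] by linarith
qed

lemma norm_a_fun_ge:
  assumes "1 \<le> \<beta>"
  shows "2/5 \<le> cmod (a_fun \<beta> \<theta>)"
proof -
  have "(2/5)\<^sup>2 \<le> (cmod (a_fun \<beta> \<theta>))\<^sup>2"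
    using sq_norm_gbdf5_a_ge [OF assms, of "cos \<theta>"]
    by (simp add: a_fun_eq norm_trig_poly_power2 abs_le_iff power_divide)
  then show ?thesis by (rule power2_le_imp_le) simp
qed

lemma a_fun_0: "a_fun \<beta> 0 = 1"
  by (simp add: a_fun_eq trig_poly_sin_eq_0 cos_poly_four gbdf5_a_def field_simps)

lemma a_fun_pi: "a_fun \<beta> pi = of_real ((10*\<beta>^4 + 60*\<beta>^3 + 90*\<beta>^2 - 32) / 15)"
  by (simp add: a_fun_eq trig_poly_sin_eq_0 cos_poly_four gbdf5_a_def field_simps)

lemma b_fun_pi: "b_fun \<beta> pi = of_real ((2*\<beta>^4 + 8*\<beta>^3 + 4*\<beta>^2 - 8*\<beta> - 3) / 3)"
  by (simp add: b_fun_eq trig_poly_sin_eq_0 cos_poly_four gbdf5_b_def field_simps) algebra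

lemma c_fun_pi: "c_fun \<beta> pi = of_real ((2*\<beta>^4 + 16*\<beta>^3 + 40*\<beta>^2 + 32*\<beta> + 3) / 3)"
  by (simp add: c_fun_eq trig_poly_sin_eq_0 cos_poly_four gbdf5_c_def field_simps) algebra

lemma gbdf5_polys_pos:
  fixes \<beta> :: real
  assumes "1 \<le> \<beta>"
  shows "0 < 10*\<beta>^4 + 60*\<beta>^3 + 90*\<beta>^2 - 32"
    and "0 < 2*\<beta>^4 + 16*\<beta>^3 + 40*\<beta>^2 + 32*\<beta> + 3"
    and "0 < 2*\<beta>^4 + 8*\<beta>^3 + 4*\<beta>^2 - 8*\<beta> - 3"
proof -
  have "1 \<le> \<beta>^2" "\<beta> \<le> \<beta>^3" "1 \<le> \<beta>^4"
    using assms power_increasing [of 1 3 \<beta>] by (simp_all add: one_le_power)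
  then show "0 < 10*\<beta>^4 + 60*\<beta>^3 + 90*\<beta>^2 - 32"
    and "0 < 2*\<beta>^4 + 16*\<beta>^3 + 40*\<beta>^2 + 32*\<beta> + 3"
    and "0 < 2*\<beta>^4 + 8*\<beta>^3 + 4*\<beta>^2 - 8*\<beta> - 3"
    using assms by linarith+
qed

lemma gbdf5_ratios_bdd:
  assumes "1 \<le> \<beta>"
  shows "bdd_above ((\<lambda>\<theta>. cmod (1 / a_fun \<beta> \<theta>)) ` S)"
    and "bdd_above ((\<lambda>\<theta>. cmod (c_fun \<beta> \<theta> / a_fun \<beta> \<theta>)) ` S)"
    and "bdd_below ((\<lambda>\<theta>. Re (b_fun \<beta> \<theta> / a_fun \<beta> \<theta>)) ` S)"
proof -
  note a = norm_a_fun_ge [OF assms]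
  have "cmod (1 / a_fun \<beta> \<theta>) \<le> 5/2" for \<theta>
    using a [of \<theta>] by (simp add: norm_divide divide_le_eq)
  then show "bdd_above ((\<lambda>\<theta>. cmod (1 / a_fun \<beta> \<theta>)) ` S)"
    by (intro bdd_aboveI2)
  have "cmod (c_fun \<beta> \<theta> / a_fun \<beta> \<theta>) \<le> (\<Sum>j\<le>4. \<bar>gbdf5_c \<beta> j\<bar>) / (2/5)" for \<theta>
    using a [of \<theta>] unfolding a_fun_eq c_fun_eq by (intro norm_trig_poly_divide_le) simp_all
  then show "bdd_above ((\<lambda>\<theta>. cmod (c_fun \<beta> \<theta> / a_fun \<beta> \<theta>)) ` S)"
    by (intro bdd_aboveI2)
  have "- ((\<Sum>j\<le>4. \<bar>gbdf5_b \<beta> j\<bar>) / (2/5)) \<le> Re (b_fun \<beta> \<theta> / a_fun \<beta> \<theta>)" for \<theta>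
    using a [of \<theta>] abs_Re_le_cmod [of "b_fun \<beta> \<theta> / a_fun \<beta> \<theta>"]
      norm_trig_poly_divide_le [of "2/5" "gbdf5_a \<beta>" 4 \<theta> "gbdf5_b \<beta>" 4]
    by (simp add: a_fun_eq b_fun_eq)
  then show "bdd_below ((\<lambda>\<theta>. Re (b_fun \<beta> \<theta> / a_fun \<beta> \<theta>)) ` S)"
    by (intro bdd_belowI2)
qed

lemma sigma_F_ge_one: "1 \<le> \<beta> \<Longrightarrow> 1 \<le> sigma_F \<beta>"
  unfolding sigma_F_def
  by (rule cSUP_upper2 [OF gbdf5_ratios_bdd(1), of _ 0]) (simp_all add: a_fun_0)

lemma sigma_E_ge:
  assumes "1 \<le> \<beta>"
  shows "5 * (2*\<beta>^4 + 16*\<beta>^3 + 40*\<beta>^2 + 32*\<beta> + 3) / (10*\<beta>^4 + 60*\<beta>^3 + 90*\<beta>^2 - 32)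
           \<le> sigma_E \<beta>"
proof -
  define D where "D = 10*\<beta>^4 + 60*\<beta>^3 + 90*\<beta>^2 - 32"
  define Y where "Y = 2*\<beta>^4 + 16*\<beta>^3 + 40*\<beta>^2 + 32*\<beta> + 3"
  have "c_fun \<beta> pi / a_fun \<beta> pi = of_real ((Y/3) / (D/15))"
    unfolding D_def Y_def a_fun_pi c_fun_pi by (rule of_real_divide [symmetric])
  moreover have "0 < D" "0 < Y"
    using gbdf5_polys_pos [OF assms] by (simp_all add: D_def Y_def)
  then have "(Y/3) / (D/15) = 5 * Y / D" "0 < 5 * Y / D"
    by simp_all
  ultimately have "cmod (c_fun \<beta> pi / a_fun \<beta> pi) = 5 * Y / D"
    by (simp only: norm_of_real abs_of_pos)
  then have "5 * Y / D \<le> sigma_E \<beta>"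
    unfolding sigma_E_def by (intro cSUP_upper2 [OF gbdf5_ratios_bdd(2) [OF assms], of pi]) simp_all
  then show ?thesis by (simp only: D_def Y_def)
qed

lemma lambda_I_le:
  assumes "1 \<le> \<beta>"
  shows "lambda_I \<beta>
           \<le> 5 * (2*\<beta>^4 + 8*\<beta>^3 + 4*\<beta>^2 - 8*\<beta> - 3) / (10*\<beta>^4 + 60*\<beta>^3 + 90*\<beta>^2 - 32)"
proof -
  define D where "D = 10*\<beta>^4 + 60*\<beta>^3 + 90*\<beta>^2 - 32"
  define X where "X = 2*\<beta>^4 + 8*\<beta>^3 + 4*\<beta>^2 - 8*\<beta> - 3"
  have "b_fun \<beta> pi / a_fun \<beta> pi = of_real ((X/3) / (D/15))"
    unfolding D_def X_def a_fun_pi b_fun_pi by (rule of_real_divide [symmetric])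
  moreover have "(X/3) / (D/15) = 5 * X / D"
    by simp
  ultimately have "Re (b_fun \<beta> pi / a_fun \<beta> pi) = 5 * X / D"
    by simp
  then have "lambda_I \<beta> \<le> 5 * X / D"
    unfolding lambda_I_def by (intro cINF_lower2 [OF gbdf5_ratios_bdd(3) [OF assms], of pi]) simp_all
  then show ?thesis by (simp only: D_def X_def)
qed

lemma I_IE_le:
  assumes "1 \<le> \<beta>"
  shows "I_IE \<beta> \<le> (2*\<beta>^4 + 8*\<beta>^3 + 4*\<beta>^2 - 8*\<beta> - 3) / (2*\<beta>^4 + 16*\<beta>^3 + 40*\<beta>^2 + 32*\<beta> + 3)"
proof -
  define D where "D = 10*\<beta>^4 + 60*\<beta>^3 + 90*\<beta>^2 - 32"
  define X where "X = 2*\<beta>^4 + 8*\<beta>^3 + 4*\<beta>^2 - 8*\<beta> - 3"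
  define Y where "Y = 2*\<beta>^4 + 16*\<beta>^3 + 40*\<beta>^2 + 32*\<beta> + 3"
  have pos: "0 < D" "0 < X" "0 < Y"
    using gbdf5_polys_pos [OF assms] by (simp_all add: D_def X_def Y_def)
  have "I_IE \<beta> \<le> (5 * X / D) / (5 * Y / D)"
    unfolding I_IE_def using lambda_I_le [OF assms] sigma_E_ge [OF assms] pos
    by (intro frac_le) (simp_all add: D_def X_def Y_def)
  also have "\<dots> = X / Y"
    using pos by simp
  finally show ?thesis by (simp add: X_def Y_def)
qed

lemma sq_norm_gbdf5_a20_gt: "(200/399)\<^sup>2 < sq_norm_poly (gbdf5_a 20) 4 x"
proof -
  have "sq_norm_poly (gbdf5_a 20) 4 x - (200/399)\<^sup>2 =
    7806995799/625000000 * (10000*x\<^sup>2 - 155801218001875/7806995799*x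
      + 2654531550674069954891/266613590733329400)\<^sup>2
    + 1173580540594816412594043217/999800965249985250000000000 * (100*x
      - 233188858420181795942791589525/2347161081189632825188086434)\<^sup>2
    + 292733023458729298976450047613033147905139242796633/94312268665435071340919648894630904170456250000000000"
    (is "_ = ?sos")
    unfolding sq_norm_poly_def cos_poly_four sin_poly_four by (simp add: gbdf5_a_def) algebra
  moreover have "0 < ?sos"
    by (intro add_nonneg_pos add_nonneg_nonneg mult_nonneg_nonneg) simp_all
  ultimately show ?thesis by linarith
qed

lemma sq_norm_gbdf5_c20_lt:
  "sq_norm_poly (gbdf5_c 20) 4 x < (2501825/2115968)\<^sup>2 * sq_norm_poly (gbdf5_a 20) 4 x"
proof -
  have "(2501825/2115968)\<^sup>2 * sq_norm_poly (gbdf5_a 20) 4 x - sq_norm_poly (gbdf5_c 20) 4 x =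
    53891464790608506339/22386602885120000000 * (10000*x\<^sup>2
      - 46731534438029134855625/2343107164809065493*x
      + 255681005817251702073558685264247/25712022037585247938134442500)\<^sup>2
    + 4858996363754012378700430432399465798376831527/13057198337895083536554806239870156800000000000
      * (100*x - 11082287655133758393979200519201801832404341679275/111756916366342284710109899945187713362667125121)\<^sup>2
    + 37940581953331642418758241047167422252235305343141286432609900848165340953482087507/4911952930118934110394186296642019700672245451329149447262851777757504000000000000000"
    (is "_ = ?sos")
    unfolding sq_norm_poly_def cos_poly_four sin_poly_four
    by (simp add: gbdf5_a_def gbdf5_c_def) algebra
  moreover have "0 < ?sos"
    by (intro add_nonneg_pos add_nonneg_nonneg mult_nonneg_nonneg) simp_all
  ultimately show ?thesis by linarith
qed

lemma re_conj_gbdf5_b20_gt: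
  "1769085/2115968 * sq_norm_poly (gbdf5_a 20) 4 x < re_conj_poly (gbdf5_b 20) 4 (gbdf5_a 20) 4 x"
proof -
  have "re_conj_poly (gbdf5_b 20) 4 (gbdf5_a 20) 4 x - 1769085/2115968 * sq_norm_poly (gbdf5_a 20) 4 x =
    741531983094211/793488000000000 * (10000*x\<^sup>2 - 14788907159849059375/741531983094211*x
      + 1448988658553026988743134621/145722454270552112349400)\<^sup>2
    + 34783612727199937479608950347906618251/231258037588463709047801414400000000000
      * (100*x - 6897915178829695130855646139880766115125/69567225454399874959217900695813236502)\<^sup>2
    + 837769939089966816496307955535032720167774230087474310634095040061/266469948755228930516296021182082737840132520825835543520000000000000"
    (is "_ = ?sos")
    unfolding re_conj_poly_def sq_norm_poly_def cos_poly_four sin_poly_four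
    by (simp add: gbdf5_a_def gbdf5_b_def) algebra
  moreover have "0 < ?sos"
    by (intro add_nonneg_pos add_nonneg_nonneg mult_nonneg_nonneg) simp_all
  ultimately show ?thesis by linarith
qed

lemma norm_inverse_a_fun20_le: "cmod (1 / a_fun 20 \<theta>) \<le> 399/200"
proof -
  have "(200/399)\<^sup>2 < (cmod (a_fun 20 \<theta>))\<^sup>2"
    using sq_norm_gbdf5_a20_gt by (simp add: a_fun_eq norm_trig_poly_power2)
  then have "200/399 < cmod (a_fun 20 \<theta>)"
    by (rule power_less_imp_less_base) simp
  then show ?thesis
    by (simp add: norm_divide divide_le_eq)
qed

lemma norm_c_fun20_divide_le: "cmod (c_fun 20 \<theta> / a_fun 20 \<theta>) \<le> 2501825/2115968"
proof -
  have a: "0 < cmod (a_fun 20 \<theta>)"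
    using norm_a_fun_ge [of 20 \<theta>] by linarith
  have "(cmod (c_fun 20 \<theta>))\<^sup>2 < (2501825/2115968 * cmod (a_fun 20 \<theta>))\<^sup>2"
    unfolding power_mult_distrib a_fun_eq c_fun_eq norm_trig_poly_power2
    by (rule sq_norm_gbdf5_c20_lt)
  then have "cmod (c_fun 20 \<theta>) < 2501825/2115968 * cmod (a_fun 20 \<theta>)"
    by (rule power_less_imp_less_base) simp
  then show ?thesis
    using a by (simp add: norm_divide divide_le_eq)
qed

lemma Re_b_fun20_divide_ge: "1769085/2115968 \<le> Re (b_fun 20 \<theta> / a_fun 20 \<theta>)"
proof -
  have "0 < sq_norm_poly (gbdf5_a 20) 4 (cos \<theta>)"
    using sq_norm_gbdf5_a20_gt [of "cos \<theta>"] by (simp add: power_divide)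
  then show ?thesis
    using re_conj_gbdf5_b20_gt [of "cos \<theta>"]
    by (simp add: a_fun_eq b_fun_eq Re_trig_poly_divide le_divide_eq)
qed

theorem mainTheorem9:
  shows "(\<forall>\<beta>::real. \<beta> \<ge> 1 \<longrightarrow>
           sigma_F \<beta> \<ge> 1
         \<and> sigma_E \<beta> \<ge> 5 * (2*\<beta>^4 + 16*\<beta>^3 + 40*\<beta>^2 + 32*\<beta> + 3)
                        / (10*\<beta>^4 + 60*\<beta>^3 + 90*\<beta>^2 - 32)
         \<and> lambda_I \<beta> \<le> 5 * (2*\<beta>^4 + 8*\<beta>^3 + 4*\<beta>^2 - 8*\<beta> - 3)
                        / (10*\<beta>^4 + 60*\<beta>^3 + 90*\<beta>^2 - 32)
         \<and> I_IE \<beta> \<le> (2*\<beta>^4 + 8*\<beta>^3 + 4*\<beta>^2 - 8*\<beta> - 3)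
                        / (2*\<beta>^4 + 16*\<beta>^3 + 40*\<beta>^2 + 32*\<beta> + 3))
       \<and> sigma_F 20 \<le> 399 / 200
       \<and> sigma_E 20 \<le> 2501825 / 2115968
       \<and> lambda_I 20 \<ge> 1769085 / 2115968
       \<and> I_IE 20 \<ge> 353817 / 500365"
proof -
  have nonempty: "{0..<2*pi} \<noteq> ({} :: real set)"
    by (simp add: pi_gt_zero)
  have F: "sigma_F 20 \<le> 399 / 200"
    unfolding sigma_F_def using nonempty by (intro cSUP_least norm_inverse_a_fun20_le)
  have E: "sigma_E 20 \<le> 2501825 / 2115968"
    unfolding sigma_E_def using nonempty by (intro cSUP_least norm_c_fun20_divide_le)
  have L: "1769085 / 2115968 \<le> lambda_I 20"
    unfolding lambda_I_def using nonempty by (intro cINF_greatest Re_b_fun20_divide_ge)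
  have "0 < sigma_E 20"
    using sigma_E_ge [of 20] by simp
  then have "(1769085 / 2115968) / (2501825 / 2115968) \<le> I_IE 20"
    unfolding I_IE_def using E L by (intro frac_le) simp_all
  then have I: "353817 / 500365 \<le> I_IE 20"
    by simp
  show ?thesis
    using sigma_F_ge_one sigma_E_ge lambda_I_le I_IE_le F E L I by blast
qed

end
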